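(* If $s,t\in\Sigma^n$ and $d:\Sigma^n\to\Sigma$ is a depth assignment, then \[D\left(P\left(H(s)+e_{d_s}\right)-P\left(H(t)+e_{d_t}\right)\right)\le n+1.\]
   Context: Let $k\ge 1$ be an integer, $\Sigma=\{0,1,\dots,k-1\}$, $n\ge 1$. A depth assignment is any function $d:\Sigma^n\to\Sigma$, written $s\mapsto d_s$. The histogram $H(s):\Sigma\to\mathbb{Z}$ of a string $s$ gives the number of occurrences of each symbol in $s$; $e_b$ is the indicator function of $b\in\Sigma$. For $H:\Sigma\to\mathbb{Z}$, the partial sum is $P(H)(i)=\sum_{j=0}^{i}H(j)$ and the difference is $D(H)=\max_{i,j\in\Sigma}(H(i)-H(j))$. *)

theory Defs
  imports Main
begin

text \<open>Alphabet Sigma = {0..<k}; strings in Sigma^n are lists of length n with entries < k.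
Functions Sigma -> Z are represented as nat => int, only values on {0..<k} matter.\<close>

definition strings :: "nat \<Rightarrow> nat \<Rightarrow> nat list set" where
  "strings k n = {s. length s = n \<and> (\<forall>x\<in>set s. x < k)}"

definition hist :: "nat list \<Rightarrow> nat \<Rightarrow> int" where
  "hist s a = int (count_list s a)"

definition indic :: "nat \<Rightarrow> nat \<Rightarrow> int" where
  "indic b a = (if a = b then 1 else 0)"

definition psum :: "(nat \<Rightarrow> int) \<Rightarrow> nat \<Rightarrow> int" where
  "psum H i = (\<Sum>j\<le>i. H j)"

definition diff :: "nat \<Rightarrow> (nat \<Rightarrow> int) \<Rightarrow> int" where
  "diff k H = Max {H i - H j | i j. i < k \<and> j < k}"

end

theory Submission
  imports Defs
begin

text \<open>The function \<open>G = H(s) + e\<^sub>b\<close> is nonnegative with total mass \<open>n + 1\<close>, so every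
increment \<open>P(G)(i) - P(G)(j)\<close> with \<open>j \<le> i\<close> lies in \<open>[0, n + 1]\<close>. The difference of two such
partial-sum functions therefore changes by at most \<open>n + 1\<close> between any two indices.\<close>

lemma sum_hist_le:
  assumes "finite A"
  shows "sum (hist s) A \<le> int (length s)"
proof -
  have "sum (count_list s) A \<le> sum (count_list s) (A \<union> set s)"
    using assms by (intro sum_mono2) auto
  also have "\<dots> = length s"
    using assms by (intro sum_count_set) auto
  finally show ?thesis
    by (simp add: hist_def flip: of_nat_sum)
qed

lemma sum_indic_le:
  assumes "finite A"
  shows "sum (indic b) A \<le> 1"
  using assms by (simp add: indic_def sum.If_cases)

lemma sum_hist_plus_indic_le:
  assumes "finite A"
  shows "(\<Sum>a\<in>A. hist s a + indic b a) \<le> int (length s) + 1"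
  using sum_hist_le[OF assms, of s] sum_indic_le[OF assms, of b]
  by (simp add: sum.distrib)

lemma psum_diff:
  assumes "j \<le> i"
  shows "psum H i - psum H j = sum H {j<..i}"
proof -
  have "{..i} = {..j} \<union> {j<..i}"
    using assms by auto
  then show ?thesis
    unfolding psum_def by (simp add: sum.union_disjoint ivl_disj_int)
qed

lemma psum_diff_bounded:
  assumes "\<And>a. 0 \<le> H a" and "\<And>A. finite A \<Longrightarrow> sum H A \<le> M" and "j \<le> i"
  shows "0 \<le> psum H i - psum H j" and "psum H i - psum H j \<le> M"
  using assms by (simp_all add: psum_diff sum_nonneg)

lemma diff_le_iff:
  assumes "0 < k"
  shows "diff k F \<le> M \<longleftrightarrow> (\<forall>i<k. \<forall>j<k. F i - F j \<le> M)"
proof -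
  have "{F i - F j | i j. i < k \<and> j < k} = (\<lambda>(i, j). F i - F j) ` ({..<k} \<times> {..<k})"
    by auto
  then have "finite {F i - F j | i j. i < k \<and> j < k}"
    by simp
  moreover have "{F i - F j | i j. i < k \<and> j < k} \<noteq> {}"
    using assms by blast
  ultimately show ?thesis
    unfolding diff_def by (auto simp: Max_le_iff)
qed

lemma diff_psum_sub_le:
  assumes "0 < k"
    and "\<And>a. 0 \<le> G a" and "\<And>A. finite A \<Longrightarrow> sum G A \<le> M"
    and "\<And>a. 0 \<le> G' a" and "\<And>A. finite A \<Longrightarrow> sum G' A \<le> M"
  shows "diff k (\<lambda>i. psum G i - psum G' i) \<le> M"
  unfolding diff_le_iff[OF \<open>0 < k\<close>]
proof (intro allI impI)
  fix i j :: nat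
  show "psum G i - psum G' i - (psum G j - psum G' j) \<le> M"
  proof (cases "j \<le> i")
    case True
    then show ?thesis
      using psum_diff_bounded[OF assms(2,3) True] psum_diff_bounded[OF assms(4,5) True]
      by linarith
  next
    case False
    then have "i \<le> j" by simp
    then show ?thesis
      using psum_diff_bounded[OF assms(2,3) \<open>i \<le> j\<close>]
        psum_diff_bounded[OF assms(4,5) \<open>i \<le> j\<close>]
      by linarith
  qed
qed

theorem lemma7:
  fixes k n :: nat and d :: "nat list \<Rightarrow> nat" and s t :: "nat list"
  assumes "k \<ge> 1" and "n \<ge> 1"
    and "\<forall>u\<in>strings k n. d u < k"
    and "s \<in> strings k n" and "t \<in> strings k n"
  shows "diff k (\<lambda>i. psum (\<lambda>a. hist s a + indic (d s) a) i
                      - psum (\<lambda>a. hist t a + indic (d t) a) i) \<le> int n + 1"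
proof (rule diff_psum_sub_le)
  have "length s = n" and "length t = n"
    using assms(4,5) by (simp_all add: strings_def)
  then show "(\<Sum>a\<in>A. hist s a + indic (d s) a) \<le> int n + 1"
    and "(\<Sum>a\<in>A. hist t a + indic (d t) a) \<le> int n + 1" if "finite A" for A
    using sum_hist_plus_indic_le[OF that] by metis+
  show "0 < k"
    using assms(1) by simp
qed (simp_all add: hist_def indic_def)

end
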